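(* Let $\{x^k\}$ be generated by Algorithm IRG with the backtracking stepsize rule. Assume $\inf_k f(x^k)>-\infty$ and $\rho_k\to0$ as $k\to\infty$. Then: (i) $\varepsilon_k\downarrow0$ and $r_k\downarrow0$; (ii) every accumulation point of $\{x^k\}$ is a stationary point of $f$; (iii) if $\{x^k\}$ is bounded, its set of accumulation points is nonempty, compact and connected; (iv) if $\{x^k\}$ has an isolated accumulation point, then the whole sequence $\{x^k\}$ converges to it.
   Context: Algorithm IRG (general inexact reduced gradient framework). Let $f:\mathbb R^n\to\mathbb R$ be continuously differentiable. Parameters: initial point $x^1\in\mathbb R^n$, initial radii $\varepsilon_1>0$, $r_1>0$, reduction factors $\mu,\theta\in(0,1)$, and a sequence $\{\rho_k\}$ of positive numbers. For $k=1,2,\dots$: (1) choose $g^k\in\mathbb R^n$ with $\|g^k-\nabla f(x^k)\|\le\min\{\varepsilon_k,\rho_k\}$; (2) if $\|g^k\|\le r_k+\varepsilon_k$, set $r_{k+1}=\mu r_k$, $\varepsilon_{k+1}=\theta\varepsilon_k$, $d^k=0$; otherwise set $r_{k+1}=r_k$, $\varepsilon_{k+1}=\varepsilon_k$ and $d^k=-\frac{\|g^k\|-\varepsilon_k}{\|g^k\|}g^k$; (3) choose a stepsize $t_k>0$ by some rule; (4) set $x^{k+1}=x^k+t_kd^k$. Backtracking stepsize rule: fix $\beta,\gamma,\tau\in(0,1)$; if $d^k=0$ set $t_k=\tau$; otherwise $t_k=\max\{t\in\{1,\gamma,\gamma^2,\dots\}: f(x^k+td^k)\le f(x^k)-\beta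 t\|d^k\|^2\}$. *)

theory Defs
  imports "HOL-Analysis.Analysis"
begin

definition acc_points :: "(nat \<Rightarrow> 'a::metric_space) \<Rightarrow> 'a set" where
  "acc_points x = {a. \<exists>h. strict_mono h \<and> (x \<circ> h) \<longlonglongrightarrow> a}"

definition armijo :: "('a::real_inner \<Rightarrow> real) \<Rightarrow> real \<Rightarrow> 'a \<Rightarrow> 'a \<Rightarrow> real \<Rightarrow> bool" where
  "armijo f \<beta> xk dk t \<longleftrightarrow> f (xk + t *\<^sub>R dk) \<le> f xk - \<beta> * t * (norm dk)\<^sup>2"

end

theory Submission
  imports Defs
begin

text \<open>The Armijo rule decreases \<open>f(x\<^sup>k)\<close> by at least \<open>\<beta> t\<^sub>k \<parallel>d\<^sup>k\<parallel>\<^sup>2\<close>, so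
  \<open>\<Sum> t\<^sub>k \<parallel>d\<^sup>k\<parallel>\<^sup>2 < \<infinity>\<close> because \<open>f\<close> is bounded below along the iterates; in particular
  \<open>\<parallel>x\<^sup>k\<^sup>+\<^sup>1 - x\<^sup>k\<parallel> \<rightarrow> 0\<close>. Near any point, uniform continuity of \<open>\<nabla>f\<close> and the mean value
  theorem prevent backtracking from shrinking \<open>t\<^sub>k\<close> much while \<open>\<parallel>d\<^sup>k\<parallel>\<close> stays away from
  zero, so vanishing decrements force short directions there. If the radii stopped shrinking,
  all later directions would be longer than \<open>r\<^sub>k\<close>, the path length would be finite and the
  limit of the iterates would contradict this; hence \<open>\<epsilon>\<^sub>k, r\<^sub>k \<rightarrow> 0\<close>. At an accumulation
  point with \<open>\<nabla>f(a) \<noteq> 0\<close> the inexact gradients stay away from zero while \<open>r\<^sub>k + \<epsilon>\<^sub>k \<rightarrow> 0\<close>,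
  again producing long directions near \<open>a\<close>. Parts (iii) and (iv) hold for every sequence
  whose consecutive distances tend to zero.\<close>

section \<open>Accumulation points of sequences with vanishing steps\<close>

lemma acc_points_iff:
  fixes x :: "nat \<Rightarrow> 'a::metric_space"
  shows "a \<in> acc_points x \<longleftrightarrow> (\<forall>e>0. \<forall>N. \<exists>k\<ge>N. dist (x k) a < e)"
proof
  assume "a \<in> acc_points x"
  then obtain h where h: "strict_mono h" "(x \<circ> h) \<longlonglongrightarrow> a"
    by (auto simp: acc_points_def)
  show "\<forall>e>0. \<forall>N. \<exists>k\<ge>N. dist (x k) a < e"
  proof (intro allI impI)
    fix e :: real and N assume "e > 0"
    then obtain M where M: "\<And>n. n \<ge> M \<Longrightarrow> dist (x (h n)) a < e"
      using h(2) unfolding lim_sequentially by auto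
    have "N \<le> h (max M N)"
      using seq_suble[OF h(1), of "max M N"] by linarith
    with M[of "max M N"] show "\<exists>k\<ge>N. dist (x k) a < e" by auto
  qed
next
  assume close: "\<forall>e>0. \<forall>N. \<exists>k\<ge>N. dist (x k) a < e"
  have "\<exists>h. \<forall>n. dist (x (h n)) a < inverse (real n + 1) \<and> h n < h (Suc n)"
  proof (rule dependent_nat_choice)
    show "\<exists>k. dist (x k) a < inverse (real 0 + 1)"
      using close[rule_format, of 1 0] by auto
    fix k n
    have "0 < inverse (real (Suc n) + 1)"
      by simp
    then obtain k' where "k' \<ge> Suc k" "dist (x k') a < inverse (real (Suc n) + 1)"
      using close by blast
    then show "\<exists>k'. dist (x k') a < inverse (real (Suc n) + 1) \<and> k < k'" by auto
  qed
  then obtain h where h: "\<And>n. dist (x (h n)) a < inverse (real n + 1)" "\<And>n. h n < h (Suc n)"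
    by blast
  have "(\<lambda>n. dist ((x \<circ> h) n) a) \<longlonglongrightarrow> 0"
  proof (rule tendsto_sandwich[of "\<lambda>_. 0" _ _ "\<lambda>n. inverse (real n + 1)"])
    show "(\<lambda>n. inverse (real n + 1)) \<longlonglongrightarrow> 0"
      using LIMSEQ_inverse_real_of_nat_add[of 0] by (simp add: add.commute)
  qed (auto intro!: always_eventually less_imp_le[OF h(1)])
  then have "(x \<circ> h) \<longlonglongrightarrow> a"
    by (rule tendsto_dist_iff[THEN iffD2])
  moreover have "strict_mono h"
    using h(2) by (simp add: strict_mono_Suc_iff)
  ultimately show "a \<in> acc_points x"
    unfolding acc_points_def by blast
qed

lemma compact_frequently_imp_acc_point:
  fixes x :: "nat \<Rightarrow> 'a::metric_space"
  assumes "compact K" and frequently: "\<And>N. \<exists>k\<ge>N. x k \<in> K"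
  shows "\<exists>b\<in>K. b \<in> acc_points x"
proof -
  let ?S = "{k. x k \<in> K}"
  have S: "infinite ?S"
    using frequently by (simp add: infinite_nat_iff_unbounded_le)
  have "\<forall>n. (x \<circ> enumerate ?S) n \<in> K"
    using enumerate_in_set[OF S] by auto
  then obtain b h where b: "b \<in> K" "strict_mono h" "(x \<circ> enumerate ?S \<circ> h) \<longlonglongrightarrow> b"
    using compact_imp_seq_compact[OF \<open>compact K\<close>] seq_compactE by metis
  have "strict_mono (enumerate ?S \<circ> h)"
    using strict_mono_enumerate[OF S] b(2) by (rule strict_mono_o)
  with b(3) have "b \<in> acc_points x"
    unfolding acc_points_def by (auto simp: comp_assoc)
  with b(1) show ?thesis by blast
qed

text \<open>If the sequence did not converge to the isolated accumulation point \<open>a\<close>, they would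
  leave and re-enter the ball of radius \<open>c\<close> around \<open>a\<close> infinitely often; with steps
  eventually shorter than \<open>c/4\<close> they cannot jump over the annulus
  \<open>cball a c - ball a (c/2)\<close>, whose compactness then yields a second accumulation point
  close to \<open>a\<close>.\<close>

lemma tendsto_isolated_acc_point:
  fixes x :: "nat \<Rightarrow> 'a::heine_borel"
  assumes steps: "(\<lambda>k. dist (x (Suc k)) (x k)) \<longlonglongrightarrow> 0"
    and a: "a \<in> acc_points x" and "e > 0"
    and isolated: "\<forall>b \<in> acc_points x. dist b a < e \<longrightarrow> b = a"
  shows "x \<longlonglongrightarrow> a"
proof (rule ccontr)
  assume "\<not> x \<longlonglongrightarrow> a"
  then obtain \<epsilon> where "\<epsilon> > 0" and far: "\<And>N. \<exists>k\<ge>N. \<epsilon> \<le> dist (x k) a"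
    unfolding lim_sequentially by (meson not_le)
  define c where "c = min \<epsilon> (e/2)"
  have c: "0 < c" "c \<le> \<epsilon>" "c < e"
    using \<open>\<epsilon> > 0\<close> \<open>e > 0\<close> by (auto simp: c_def)
  obtain M where M: "\<And>k. k \<ge> M \<Longrightarrow> dist (x (Suc k)) (x k) < c/4"
    using LIMSEQ_D[OF steps, of "c/4"] c(1) by auto
  let ?A = "cball a c - ball a (c/2)"
  have crossing: "\<exists>k\<ge>N. x k \<in> ?A" for N
  proof (rule ccontr)
    assume avoid: "\<not> (\<exists>k\<ge>N. x k \<in> ?A)"
    obtain k0 where k0: "k0 \<ge> max N M" "dist (x k0) a < c/2"
      using a c(1) unfolding acc_points_iff by (meson half_gt_zero)
    have inside: "dist (x k) a < c/2" if "k \<ge> k0" for k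
      using that
    proof (induction k rule: dec_induct)
      case (step k)
      have "dist (x (Suc k)) a \<le> dist (x (Suc k)) (x k) + dist (x k) a"
        by (rule dist_triangle)
      also have "\<dots> < c"
        using M[of k] step k0 c(1) by simp
      finally show ?case
        using avoid step k0 by (auto simp: dist_commute)
    qed (use k0 in simp)
    obtain k where "k \<ge> k0" "\<epsilon> \<le> dist (x k) a"
      using far by blast
    with inside[of k] c show False by simp
  qed
  have "compact ?A"
    by (intro compact_diff compact_cball open_ball)
  then obtain b where b: "b \<in> ?A" "b \<in> acc_points x"
    using compact_frequently_imp_acc_point crossing by blast
  with isolated c have "b = a"
    by (auto simp: dist_commute)
  with b(1) c(1) show False by simp
qed

definition polygon_tail :: "(nat \<Rightarrow> 'a::real_vector) \<Rightarrow> nat \<Rightarrow> 'a set" where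
  "polygon_tail x N = (\<Union>k\<in>{N..}. closed_segment (x k) (x (Suc k)))"

lemma polygon_tail_antimono: "N \<le> M \<Longrightarrow> polygon_tail x M \<subseteq> polygon_tail x N"
  unfolding polygon_tail_def by (intro UN_mono) auto

lemma connected_polygon_tail:
  fixes x :: "nat \<Rightarrow> 'a::real_normed_vector"
  shows "connected (polygon_tail x N)"
proof -
  define P where "P m = (\<Union>k\<in>{N..N+m}. closed_segment (x k) (x (Suc k)))" for m
  have "connected (P m) \<and> x N \<in> P m" for m
  proof (induction m)
    case (Suc m)
    have P_Suc: "P (Suc m) = closed_segment (x (Suc (N+m))) (x (Suc (Suc (N+m)))) \<union> P m"
      unfolding P_def by (simp add: atLeastAtMostSuc_conv)
    have "x (Suc (N+m)) \<in> P m"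
      unfolding P_def by (intro UN_I[of "N+m"]) auto
    then have "connected (P (Suc m))"
      unfolding P_Suc using Suc.IH by (intro connected_Un) auto
    with Suc.IH P_Suc show ?case by auto
  qed (simp add: P_def)
  then have "connected (\<Union>(range P))"
    by (intro connected_Union) auto
  moreover have "{N..} = (\<Union>m. {N..N+m})"
  proof (intro equalityI subsetI)
    fix k assume "k \<in> {N..}"
    then have "k \<in> {N..N + (k - N)}" by simp
    then show "k \<in> (\<Union>m. {N..N+m})" by blast
  qed auto
  then have "polygon_tail x N = \<Union>(range P)"
    unfolding polygon_tail_def P_def by auto
  ultimately show ?thesis by simp
qed

lemma acc_points_eq_Inter_closure_polygon_tail:
  fixes x :: "nat \<Rightarrow> 'a::euclidean_space"
  assumes steps: "(\<lambda>k. dist (x (Suc k)) (x k)) \<longlonglongrightarrow> 0"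
  shows "acc_points x = (\<Inter>N. closure (polygon_tail x N))"
proof (intro equalityI subsetI)
  fix a assume a: "a \<in> acc_points x"
  have "a \<in> closure (polygon_tail x N)" for N
    unfolding closure_approachable
  proof (intro allI impI)
    fix e :: real assume "e > 0"
    then obtain k where "k \<ge> N" "dist (x k) a < e"
      using a unfolding acc_points_iff by blast
    moreover have "x k \<in> polygon_tail x N" if "k \<ge> N"
      unfolding polygon_tail_def using that by auto
    ultimately show "\<exists>y\<in>polygon_tail x N. dist y a < e" by blast
  qed
  then show "a \<in> (\<Inter>N. closure (polygon_tail x N))" by blast
next
  fix a assume a: "a \<in> (\<Inter>N. closure (polygon_tail x N))"
  show "a \<in> acc_points x"
    unfolding acc_points_iff
  proof (intro allI impI)
    fix e :: real and N assume "e > 0"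
    then obtain M where M: "\<And>k. k \<ge> M \<Longrightarrow> dist (x (Suc k)) (x k) < e/2"
      using LIMSEQ_D[OF steps, of "e/2"] by auto
    have "a \<in> closure (polygon_tail x (max N M))"
      using a by blast
    then obtain z where z: "z \<in> polygon_tail x (max N M)" "dist z a < e/2"
      using \<open>e > 0\<close> unfolding closure_approachable by (meson half_gt_zero)
    then obtain k where k: "k \<ge> max N M" "z \<in> closed_segment (x k) (x (Suc k))"
      unfolding polygon_tail_def by blast
    have "dist z (x k) \<le> dist (x k) (x (Suc k))"
      using dist_in_closed_segment[OF k(2)] by blast
    also have "\<dots> < e/2"
      using M[of k] k(1) by (simp add: dist_commute)
    finally have "dist (x k) a < e"
      using z(2) dist_triangle[of "x k" a z] by (simp add: dist_commute)
    with k(1) show "\<exists>k\<ge>N. dist (x k) a < e" by auto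
  qed
qed

lemma acc_points_nonempty_compact_connected:
  fixes x :: "nat \<Rightarrow> 'a::euclidean_space"
  assumes "bounded (range x)"
    and steps: "(\<lambda>k. dist (x (Suc k)) (x k)) \<longlonglongrightarrow> 0"
  shows "acc_points x \<noteq> {} \<and> compact (acc_points x) \<and> connected (acc_points x)"
proof -
  obtain B where B: "\<And>k. x k \<in> cball 0 B"
    using \<open>bounded (range x)\<close> unfolding bounded_iff by (auto simp: dist_norm)
  have "polygon_tail x N \<subseteq> cball 0 B" for N
    unfolding polygon_tail_def using closed_segment_subset[OF B B convex_cball] by blast
  then have compact_tail: "compact (closure (polygon_tail x N))" for N
    by (meson bounded_cball bounded_subset compact_closure)
  have "acc_points x \<noteq> {}"
    using bounded_imp_convergent_subsequence[OF \<open>bounded (range x)\<close>]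
    unfolding acc_points_def by blast
  moreover have "compact (\<Inter>N. closure (polygon_tail x N))"
    using compact_tail by (intro compact_Inter) auto
  moreover have "connected (\<Inter>N. closure (polygon_tail x N))"
    by (rule connected_nest) (use compact_tail in \<open>auto intro!: connected_imp_connected_closure
      connected_polygon_tail closure_mono polygon_tail_antimono\<close>)
  ultimately show ?thesis
    using acc_points_eq_Inter_closure_polygon_tail[OF steps] by simp
qed

lemma decseq_tendsto_zero_if_frequently_contracts:
  fixes e :: "nat \<Rightarrow> real"
  assumes "decseq e" and nonneg: "\<And>k. 0 \<le> e k"
    and contracts: "\<And>N. \<exists>k\<ge>N. e (Suc k) = q * e k" and "q < 1"
  shows "e \<longlonglongrightarrow> 0"
proof -
  obtain L where L: "e \<longlonglongrightarrow> L"
    using decseq_convergent[OF \<open>decseq e\<close>, of 0] nonneg by blast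
  have "L \<ge> 0"
    using LIMSEQ_le_const[OF L] nonneg by blast
  have "L = 0"
  proof (rule ccontr)
    assume "L \<noteq> 0"
    with \<open>L \<ge> 0\<close> \<open>q < 1\<close> have "0 < L - q * L"
      by (simp add: algebra_simps)
    moreover have "(\<lambda>k. e (Suc k) - q * e k) \<longlonglongrightarrow> L - q * L"
      by (intro tendsto_diff tendsto_mult_left L LIMSEQ_Suc)
    ultimately have "eventually (\<lambda>k. 0 < e (Suc k) - q * e k) sequentially"
      by (rule order_tendstoD(1)[rotated])
    then obtain N where "\<And>k. k \<ge> N \<Longrightarrow> 0 < e (Suc k) - q * e k"
      unfolding eventually_sequentially by blast
    with contracts[of N] show False by fastforce
  qed
  with L show ?thesis by simp
qed

lemma convergent_if_summable_steps:
  fixes x :: "nat \<Rightarrow> 'a::banach"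
  assumes "summable (\<lambda>k. norm (x (Suc k) - x k))"
  shows "convergent x"
proof -
  have "convergent (\<lambda>n. \<Sum>k<n. x (Suc k) - x k)"
    using summable_norm_cancel[OF assms] by (simp add: summable_iff_convergent)
  then have "convergent (\<lambda>n. x n - x 0)"
    by (simp add: sum_lessThan_telescope)
  from convergent_add[OF this convergent_const[of "x 0"]] show ?thesis
    by simp
qed

section \<open>Reduced directions and the Armijo test\<close>

definition reduced_direction :: "real \<Rightarrow> 'a::real_normed_vector \<Rightarrow> 'a" where
  "reduced_direction \<epsilon> g = - (((norm g - \<epsilon>) / norm g) *\<^sub>R g)"

lemma norm_reduced_direction:
  fixes g :: "'a::real_normed_vector"
  assumes "0 \<le> \<epsilon>" "\<epsilon> < norm g"
  shows "norm (reduced_direction \<epsilon> g) = norm g - \<epsilon>"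
  using assms by (auto simp: reduced_direction_def)

lemma reduced_direction_descent:
  fixes g G :: "'a::real_inner"
  assumes "norm (g - G) \<le> \<epsilon>" "0 \<le> \<epsilon>" "\<epsilon> < norm g"
  shows "G \<bullet> reduced_direction \<epsilon> g \<le> - (norm (reduced_direction \<epsilon> g))\<^sup>2"
proof -
  let ?d = "reduced_direction \<epsilon> g"
  have nd: "norm ?d = norm g - \<epsilon>"
    using assms(2,3) by (rule norm_reduced_direction)
  have "g \<bullet> ?d = - ((norm g - \<epsilon>) / norm g * (norm g)\<^sup>2)"
    by (simp add: reduced_direction_def dot_square_norm)
  also have "\<dots> = - ((norm g - \<epsilon>) * norm g)"
    using assms(2,3) by (simp add: power2_eq_square)
  finally have exact: "g \<bullet> ?d = - ((norm g - \<epsilon>) * norm g)" .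
  have "(G - g) \<bullet> ?d \<le> norm (G - g) * norm ?d"
    by (rule norm_cauchy_schwarz)
  also have "\<dots> \<le> \<epsilon> * (norm g - \<epsilon>)"
    unfolding nd using assms norm_minus_commute[of G g] by (simp add: mult_right_mono)
  finally have error: "(G - g) \<bullet> ?d \<le> \<epsilon> * (norm g - \<epsilon>)" .
  have "G \<bullet> ?d = g \<bullet> ?d + (G - g) \<bullet> ?d"
    by (simp add: inner_diff_left)
  also have "\<dots> \<le> - ((norm g - \<epsilon>) * norm g) + \<epsilon> * (norm g - \<epsilon>)"
    using exact error by linarith
  also have "\<dots> = - (norm ?d)\<^sup>2"
    unfolding nd by (simp add: power2_eq_square algebra_simps)
  finally show ?thesis .
qed

text \<open>The mean value theorem along the segment turns a failed Armijo test into a lower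
  bound on the variation of the gradient.\<close>

lemma armijo_failure_gradient_gap:
  fixes f :: "'a::real_inner \<Rightarrow> real"
  assumes f_grad: "\<And>y. (f has_derivative (\<lambda>h. grad y \<bullet> h)) (at y)"
    and fail: "\<not> armijo f \<beta> y v \<sigma>" and "0 < \<sigma>"
    and descent: "grad y \<bullet> v \<le> - (norm v)\<^sup>2" and "v \<noteq> 0"
  shows "\<exists>z\<in>{0<..<\<sigma>}. (1 - \<beta>) * norm v < norm (grad (y + z *\<^sub>R v) - grad y)"
proof -
  have "((\<lambda>u. f (y + u *\<^sub>R v)) has_real_derivative grad (y + u *\<^sub>R v) \<bullet> v) (at u)" for u
  proof -
    have "((\<lambda>u. y + u *\<^sub>R v) has_derivative (\<lambda>h. h *\<^sub>R v)) (at u)"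
      by (auto intro!: derivative_eq_intros)
    from has_derivative_compose[OF this f_grad] show ?thesis
      unfolding has_field_derivative_def by (rule has_derivative_eq_rhs) (auto simp: fun_eq_iff)
  qed
  then obtain z where z: "0 < z" "z < \<sigma>"
    and mvt: "f (y + \<sigma> *\<^sub>R v) - f (y + 0 *\<^sub>R v) = (\<sigma> - 0) * (grad (y + z *\<^sub>R v) \<bullet> v)"
    using MVT2[OF \<open>0 < \<sigma>\<close>, of "\<lambda>u. f (y + u *\<^sub>R v)" "\<lambda>u. grad (y + u *\<^sub>R v) \<bullet> v"] by blast
  let ?G = "grad (y + z *\<^sub>R v) - grad y"
  have "\<sigma> * (- \<beta> * (norm v)\<^sup>2) < \<sigma> * (grad (y + z *\<^sub>R v) \<bullet> v)"
    using fail mvt by (simp add: armijo_def algebra_simps)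
  then have "- \<beta> * (norm v)\<^sup>2 < grad (y + z *\<^sub>R v) \<bullet> v"
    by (rule mult_less_cancel_left_pos[OF \<open>0 < \<sigma>\<close>, THEN iffD1])
  then have "(1 - \<beta>) * (norm v)\<^sup>2 < ?G \<bullet> v"
    using descent by (simp add: inner_diff_left algebra_simps)
  also have "\<dots> \<le> norm ?G * norm v"
    by (rule norm_cauchy_schwarz)
  finally have "(1 - \<beta>) * norm v * norm v < norm ?G * norm v"
    by (simp add: power2_eq_square mult.assoc)
  then have "(1 - \<beta>) * norm v < norm ?G"
    using \<open>v \<noteq> 0\<close> by simp
  with z show ?thesis by auto
qed

section \<open>Convergence of the inexact reduced gradient method\<close>

locale irg =
  fixes f :: "'a::euclidean_space \<Rightarrow> real"
    and grad :: "'a \<Rightarrow> 'a"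
    and x g d :: "nat \<Rightarrow> 'a"
    and eps r t rho :: "nat \<Rightarrow> real"
    and \<mu> \<theta> \<beta> \<gamma> \<tau> :: real
  assumes f_grad: "\<And>y. (f has_derivative (\<lambda>h. grad y \<bullet> h)) (at y)"
    and grad_cont: "continuous_on UNIV grad"
    and eps0: "eps 0 > 0" and r0: "r 0 > 0"
    and mu: "0 < \<mu>" "\<mu> < 1" and theta: "0 < \<theta>" "\<theta> < 1"
    and beta: "0 < \<beta>" "\<beta> < 1" and gamma: "0 < \<gamma>" "\<gamma> < 1"
    and tau: "0 < \<tau>"
    and step1: "\<And>k. norm (g k - grad (x k)) \<le> min (eps k) (rho k)"
    and step2: "\<And>k. if norm (g k) \<le> r k + eps k
        then r (Suc k) = \<mu> * r k \<and> eps (Suc k) = \<theta> * eps k \<and> d k = 0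
        else r (Suc k) = r k \<and> eps (Suc k) = eps k \<and>
             d k = - (((norm (g k) - eps k) / norm (g k)) *\<^sub>R g k)"
    and stepsize: "\<And>k. if d k = 0 then t k = \<tau>
        else (\<exists>j::nat. t k = \<gamma> ^ j \<and> armijo f \<beta> (x k) (d k) (\<gamma> ^ j) \<and>
                 (\<forall>i<j. \<not> armijo f \<beta> (x k) (d k) (\<gamma> ^ i)))"
    and update: "\<And>k. x (Suc k) = x k + t k *\<^sub>R d k"
    and f_bdd: "bdd_below (range (\<lambda>k. f (x k)))"
    and rho_lim: "rho \<longlonglongrightarrow> 0"
begin

lemma radii_pos: "0 < eps k \<and> 0 < r k"
proof (induction k)
  case 0
  show ?case using eps0 r0 by simp
next
  case (Suc k)
  then show ?case using step2[of k] mu theta by (auto split: if_splits)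
qed

lemma null_direction_iff: "d k = 0 \<longleftrightarrow> norm (g k) \<le> r k + eps k"
proof (cases "norm (g k) \<le> r k + eps k")
  case False
  then have "d k = reduced_direction (eps k) (g k)"
    using step2[of k] by (simp add: reduced_direction_def)
  moreover have "norm (reduced_direction (eps k) (g k)) = norm (g k) - eps k"
    using False radii_pos[of k] by (intro norm_reduced_direction) auto
  ultimately show ?thesis
    using False radii_pos[of k] by auto
qed (use step2[of k] in simp)

lemma nonnull_direction:
  assumes "d k \<noteq> 0"
  shows "r k + eps k < norm (g k)" and "d k = reduced_direction (eps k) (g k)"
    and "eps (Suc k) = eps k" and "r (Suc k) = r k"
    and "norm (d k) = norm (g k) - eps k"
proof -
  show long: "r k + eps k < norm (g k)"
    using assms null_direction_iff by simp
  show d: "d k = reduced_direction (eps k) (g k)" and "eps (Suc k) = eps k" "r (Suc k) = r k"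
    using step2[of k] long by (auto simp: reduced_direction_def)
  show "norm (d k) = norm (g k) - eps k"
    unfolding d using long radii_pos[of k] by (intro norm_reduced_direction) auto
qed

lemma null_direction_contracts:
  assumes "d k = 0"
  shows "eps (Suc k) = \<theta> * eps k" and "r (Suc k) = \<mu> * r k"
  using step2[of k] assms null_direction_iff by auto

lemma decseq_eps: "decseq eps"
proof (rule decseq_SucI)
  show "eps (Suc k) \<le> eps k" for k
    using null_direction_contracts(1)[of k] nonnull_direction(3)[of k] radii_pos[of k] theta
    by (cases "d k = 0") simp_all
qed

lemma decseq_r: "decseq r"
proof (rule decseq_SucI)
  show "r (Suc k) \<le> r k" for k
    using null_direction_contracts(2)[of k] nonnull_direction(4)[of k] radii_pos[of k] mu
    by (cases "d k = 0") simp_all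
qed

lemma stepsize_pos: "0 < t k"
  using stepsize[of k] tau gamma by (auto split: if_splits)

lemma backtracking_stepsize:
  assumes "d k \<noteq> 0"
  obtains j where "t k = \<gamma> ^ j" and "armijo f \<beta> (x k) (d k) (t k)"
    and "\<And>i. i < j \<Longrightarrow> \<not> armijo f \<beta> (x k) (d k) (\<gamma> ^ i)"
  using stepsize[of k] assms by auto

lemma stepsize_le_one:
  assumes "d k \<noteq> 0"
  shows "t k \<le> 1"
proof -
  obtain j where "t k = \<gamma> ^ j"
    using backtracking_stepsize[OF assms] by blast
  with gamma show ?thesis
    by (simp add: power_le_one)
qed

lemma armijo_fails_at_previous_trial:
  assumes "d k \<noteq> 0" and "t k < 1"
  shows "\<not> armijo f \<beta> (x k) (d k) (t k / \<gamma>)"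
proof -
  obtain j where j: "t k = \<gamma> ^ j" and fails: "\<And>i. i < j \<Longrightarrow> \<not> armijo f \<beta> (x k) (d k) (\<gamma> ^ i)"
    using backtracking_stepsize[OF assms(1)] by blast
  with \<open>t k < 1\<close> obtain i where "j = Suc i"
    by (cases j) auto
  with j gamma have "t k / \<gamma> = \<gamma> ^ i"
    by simp
  with fails \<open>j = Suc i\<close> show ?thesis
    by simp
qed

definition decrement :: "nat \<Rightarrow> real" where
  "decrement k = t k * (norm (d k))\<^sup>2"

lemma decrement_nonneg: "0 \<le> decrement k"
  unfolding decrement_def using stepsize_pos[of k] by simp

lemma f_decrease: "f (x (Suc k)) \<le> f (x k) - \<beta> * decrement k"
proof (cases "d k = 0")
  case True
  then show ?thesis using update[of k] by (simp add: decrement_def)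
next
  case False
  then obtain j where "armijo f \<beta> (x k) (d k) (t k)"
    by (rule backtracking_stepsize)
  then show ?thesis
    using update[of k] by (simp add: armijo_def decrement_def mult.assoc)
qed

lemma summable_decrement: "summable decrement"
proof -
  obtain m where m: "\<And>k. m \<le> f (x k)"
    using f_bdd unfolding bdd_below_def by auto
  have telescoped: "f (x n) \<le> f (x 0) - \<beta> * (\<Sum>k<n. decrement k)" for n
  proof (induction n)
    case (Suc n)
    then show ?case using f_decrease[of n] by (simp add: algebra_simps)
  qed simp
  have "(\<Sum>k<n. decrement k) \<le> (f (x 0) - m) / \<beta>" for n
  proof -
    have "\<beta> * (\<Sum>k<n. decrement k) \<le> f (x 0) - m"
      using telescoped[of n] m[of n] by linarith
    with beta show ?thesis
      by (simp add: pos_le_divide_eq mult.commute)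
  qed
  then show ?thesis
    using decrement_nonneg by (intro summableI_nonneg_bounded) auto
qed

lemma decrement_tendsto_zero: "decrement \<longlonglongrightarrow> 0"
  using summable_decrement by (rule summable_LIMSEQ_zero)

lemma dist_step_le: "dist (x (Suc k)) (x k) \<le> sqrt (decrement k)"
proof (cases "d k = 0")
  case True
  then show ?thesis using update[of k] decrement_nonneg[of k] by simp
next
  case False
  have t: "0 < t k" "t k \<le> 1"
    using stepsize_pos stepsize_le_one[OF False] by auto
  have "(t k * norm (d k))\<^sup>2 = t k * (t k * (norm (d k))\<^sup>2)"
    by (simp add: power2_eq_square)
  also have "\<dots> \<le> decrement k"
    using t by (simp add: decrement_def mult_left_le_one_le)
  finally have "(t k * norm (d k))\<^sup>2 \<le> decrement k" .
  moreover have "dist (x (Suc k)) (x k) = t k * norm (d k)"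
    using update[of k] t by (simp add: dist_norm)
  ultimately show ?thesis
    by (simp add: real_le_rsqrt)
qed

lemma step_tendsto_zero: "(\<lambda>k. dist (x (Suc k)) (x k)) \<longlonglongrightarrow> 0"
proof (rule tendsto_sandwich[OF _ _ tendsto_const])
  show "(\<lambda>k. sqrt (decrement k)) \<longlonglongrightarrow> 0"
    using tendsto_real_sqrt[OF decrement_tendsto_zero] by simp
qed (auto intro!: always_eventually dist_step_le)

lemma descent_direction:
  assumes "d k \<noteq> 0"
  shows "grad (x k) \<bullet> d k \<le> - (norm (d k))\<^sup>2"
proof -
  have "norm (g k - grad (x k)) \<le> eps k"
    using step1[of k] by simp
  moreover have "eps k < norm (g k)"
    using nonnull_direction(1)[OF assms] radii_pos[of k] by linarith
  ultimately have "grad (x k) \<bullet> reduced_direction (eps k) (g k)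
      \<le> - (norm (reduced_direction (eps k) (g k)))\<^sup>2"
    using radii_pos[of k] by (intro reduced_direction_descent) auto
  then show ?thesis
    unfolding nonnull_direction(2)[OF assms] .
qed

lemma norm_direction_le_norm_grad:
  assumes "d k \<noteq> 0"
  shows "norm (d k) \<le> norm (grad (x k))"
proof -
  have "norm (g k) \<le> norm (grad (x k)) + norm (g k - grad (x k))"
    by (rule norm_triangle_sub)
  also have "\<dots> \<le> norm (grad (x k)) + eps k"
    using step1[of k] by simp
  finally show ?thesis
    using nonnull_direction(5)[OF assms] by simp
qed

lemma backtracking_gradient_gap:
  assumes "d k \<noteq> 0" and "t k < 1"
  shows "\<exists>z\<in>{0<..<t k / \<gamma>}. (1 - \<beta>) * norm (d k) < norm (grad (x k + z *\<^sub>R d k) - grad (x k))"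
proof -
  have "0 < t k / \<gamma>"
    using stepsize_pos[of k] gamma by simp
  from armijo_failure_gradient_gap[OF f_grad armijo_fails_at_previous_trial[OF assms] this
      descent_direction[OF assms(1)] assms(1)]
  show ?thesis .
qed

text \<open>A rejected trial step \<open>t\<^sub>k/\<gamma> < \<sigma>\<^sub>0\<close> keeps the trial point within distance
  \<open>\<omega>/2\<close> of \<open>x\<^sup>k\<close>, where \<open>\<nabla>f\<close> varies by less than \<open>(1 - \<beta>) c\<close>; this contradicts
  \<open>backtracking_gradient_gap\<close>.\<close>

lemma stepsize_lower_bound_near:
  assumes "0 < c"
  obtains t_min where "0 < t_min"
    and "\<And>k. dist (x k) a < 1/2 \<Longrightarrow> d k \<noteq> 0 \<Longrightarrow> c \<le> norm (d k) \<Longrightarrow> t_min \<le> t k"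
proof -
  have cont: "continuous_on (cball a 1) grad"
    using grad_cont by (rule continuous_on_subset) simp
  have "0 < (1 - \<beta>) * c"
    using beta assms by simp
  then obtain \<eta> where "0 < \<eta>" and \<eta>: "\<And>u v. u \<in> cball a 1 \<Longrightarrow> v \<in> cball a 1 \<Longrightarrow>
      dist v u < \<eta> \<Longrightarrow> dist (grad v) (grad u) < (1 - \<beta>) * c"
    using compact_uniformly_continuous[OF cont compact_cball]
    unfolding uniformly_continuous_on_def by metis
  obtain M where "0 < M" and M: "\<And>u. u \<in> cball a 1 \<Longrightarrow> norm (grad u) \<le> M"
    using compact_imp_bounded[OF compact_continuous_image[OF cont compact_cball]]
    unfolding bounded_pos by auto
  define \<omega> where "\<omega> = min \<eta> (1/2)"
  have \<omega>: "0 < \<omega>" "\<omega> \<le> \<eta>" "\<omega> \<le> 1/2"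
    using \<open>0 < \<eta>\<close> by (auto simp: \<omega>_def)
  define \<sigma>\<^sub>0 where "\<sigma>\<^sub>0 = \<omega> / (2 * (M + 1))"
  have \<sigma>\<^sub>0: "0 < \<sigma>\<^sub>0" "\<sigma>\<^sub>0 < 1" "\<sigma>\<^sub>0 * M < \<omega> / 2"
    using \<omega> \<open>0 < M\<close> by (auto simp: \<sigma>\<^sub>0_def field_simps)
  show thesis
  proof (rule that)
    show "0 < \<gamma> * \<sigma>\<^sub>0"
      using gamma \<sigma>\<^sub>0 by simp
  next
    fix k assume near: "dist (x k) a < 1/2" and "d k \<noteq> 0" and long: "c \<le> norm (d k)"
    show "\<gamma> * \<sigma>\<^sub>0 \<le> t k"
    proof (rule ccontr)
      assume "\<not> \<gamma> * \<sigma>\<^sub>0 \<le> t k"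
      then have trial: "t k / \<gamma> < \<sigma>\<^sub>0"
        using gamma by (simp add: pos_divide_less_eq mult.commute)
      have "t k < \<sigma>\<^sub>0 * \<gamma>"
        using trial gamma by (simp add: divide_less_eq)
      also have "\<dots> < 1"
        using \<sigma>\<^sub>0 gamma mult_strict_mono[of "\<sigma>\<^sub>0" 1 \<gamma> 1] by simp
      finally have "t k < 1" .
      obtain z where z: "0 < z" "z < t k / \<gamma>"
        and gap: "(1 - \<beta>) * norm (d k) < norm (grad (x k + z *\<^sub>R d k) - grad (x k))"
        using backtracking_gradient_gap[OF \<open>d k \<noteq> 0\<close> \<open>t k < 1\<close>] by auto
      have xk: "x k \<in> cball a 1"
        using near by (simp add: dist_commute)
      have "dist (x k + z *\<^sub>R d k) (x k) = z * norm (d k)"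
        using z by (simp add: dist_norm)
      also have "\<dots> \<le> \<sigma>\<^sub>0 * M"
        using z trial norm_direction_le_norm_grad[OF \<open>d k \<noteq> 0\<close>] M[OF xk]
        by (intro mult_mono) auto
      also have "\<dots> < \<omega> / 2"
        by (fact \<sigma>\<^sub>0(3))
      finally have close: "dist (x k + z *\<^sub>R d k) (x k) < \<omega> / 2" .
      then have "x k + z *\<^sub>R d k \<in> cball a 1"
        using near \<omega> dist_triangle[of a "x k + z *\<^sub>R d k" "x k"] by (simp add: dist_commute)
      with \<eta>[OF xk] close \<omega> have "norm (grad (x k + z *\<^sub>R d k) - grad (x k)) < (1 - \<beta>) * c"
        by (simp add: dist_norm)
      moreover have "(1 - \<beta>) * c \<le> (1 - \<beta>) * norm (d k)"
        using long beta by simp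
      ultimately show False
        using gap by simp
    qed
  qed
qed

lemma short_direction_if_small_decrement:
  assumes "0 < c"
  obtains \<delta> where "0 < \<delta>"
    and "\<And>k. dist (x k) a < 1/2 \<Longrightarrow> d k \<noteq> 0 \<Longrightarrow> decrement k < \<delta> \<Longrightarrow> norm (d k) < c"
proof -
  obtain t_min where "0 < t_min" and t_min: "\<And>k. dist (x k) a < 1/2 \<Longrightarrow> d k \<noteq> 0 \<Longrightarrow>
      c \<le> norm (d k) \<Longrightarrow> t_min \<le> t k"
    using stepsize_lower_bound_near[OF assms] by blast
  show thesis
  proof (rule that)
    show "0 < t_min * c\<^sup>2"
      using \<open>0 < t_min\<close> assms by simp
  next
    fix k assume near: "dist (x k) a < 1/2" and "d k \<noteq> 0" and small: "decrement k < t_min * c\<^sup>2"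
    show "norm (d k) < c"
    proof (rule ccontr)
      assume "\<not> norm (d k) < c"
      then have long: "c \<le> norm (d k)" by simp
      have "t_min * c\<^sup>2 \<le> t k * (norm (d k))\<^sup>2"
        using t_min[OF near \<open>d k \<noteq> 0\<close> long] \<open>0 < t_min\<close> long assms
        by (intro mult_mono power_mono) auto
      with small show False
        by (simp add: decrement_def)
    qed
  qed
qed

lemma gradient_error_tendsto_zero: "(\<lambda>k. g k - grad (x k)) \<longlonglongrightarrow> 0"
proof (rule tendsto_norm_zero_cancel)
  have "norm (g k - grad (x k)) \<le> rho k" for k
    using step1[of k] by simp
  then show "(\<lambda>k. norm (g k - grad (x k))) \<longlonglongrightarrow> 0"
    by (intro tendsto_sandwich[OF _ _ tendsto_const rho_lim] always_eventually) auto
qed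

lemma inexact_gradient_subseq_tendsto:
  assumes "strict_mono h" and "(x \<circ> h) \<longlonglongrightarrow> a"
  shows "(\<lambda>j. g (h j)) \<longlonglongrightarrow> grad a"
proof -
  have "(\<lambda>j. (g (h j) - grad (x (h j))) + grad (x (h j))) \<longlonglongrightarrow> 0 + grad a"
    using LIMSEQ_subseq_LIMSEQ[OF gradient_error_tendsto_zero assms(1)]
      continuous_on_tendsto_compose[OF grad_cont assms(2)]
    by (intro tendsto_add) (auto simp: o_def)
  then show ?thesis
    by simp
qed

lemma long_directions_if_eventually_nonnull:
  assumes nonnull: "\<And>k. N \<le> k \<Longrightarrow> d k \<noteq> 0" and "N \<le> k"
  shows "r N < norm (d k)"
proof -
  have "r k = r N"
    using \<open>N \<le> k\<close> by (induction k rule: dec_induct) (auto simp: nonnull_direction(4)[OF nonnull])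
  then show ?thesis
    using nonnull_direction(1,5)[OF nonnull[OF \<open>N \<le> k\<close>]] by simp
qed

lemma convergent_if_eventually_nonnull:
  assumes nonnull: "\<And>k. N \<le> k \<Longrightarrow> d k \<noteq> 0"
  shows "convergent x"
proof -
  have "norm (x (Suc k) - x k) \<le> decrement k / r N" if "N \<le> k" for k
  proof -
    have "t k * norm (d k) * r N \<le> t k * norm (d k) * norm (d k)"
      using long_directions_if_eventually_nonnull[OF nonnull that] stepsize_pos[of k]
      by (intro mult_left_mono) auto
    then show ?thesis
      using update[of k] stepsize_pos[of k] radii_pos[of N]
      by (simp add: decrement_def pos_le_divide_eq power2_eq_square)
  qed
  then have "summable (\<lambda>k. norm (x (Suc k) - x k))"
    by (intro summable_comparison_test'[OF summable_divide[OF summable_decrement]]) auto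
  then show ?thesis
    by (rule convergent_if_summable_steps)
qed

text \<open>Were \<open>d\<^sup>k\<close> eventually nonzero, the iterates would converge while the directions stay
  longer than the constant radius \<open>r\<^sub>N\<close>, contradicting \<open>short_direction_if_small_decrement\<close> at the
  limit.\<close>

lemma frequently_null_direction: "\<exists>k\<ge>N. d k = 0"
proof (rule ccontr)
  assume "\<not> (\<exists>k\<ge>N. d k = 0)"
  then have nonnull: "\<And>k. N \<le> k \<Longrightarrow> d k \<noteq> 0" by blast
  then obtain a where "x \<longlonglongrightarrow> a"
    using convergent_if_eventually_nonnull unfolding convergent_def by blast
  obtain \<delta> where "0 < \<delta>" and short: "\<And>k. dist (x k) a < 1/2 \<Longrightarrow> d k \<noteq> 0 \<Longrightarrow>
      decrement k < \<delta> \<Longrightarrow> norm (d k) < r N"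
    using short_direction_if_small_decrement radii_pos[of N] by blast
  have "\<forall>\<^sub>F k in sequentially. dist (x k) a < 1/2"
    using \<open>x \<longlonglongrightarrow> a\<close> by (rule tendstoD) simp
  moreover have "\<forall>\<^sub>F k in sequentially. decrement k < \<delta>"
    using decrement_tendsto_zero \<open>0 < \<delta>\<close> by (rule order_tendstoD(2))
  moreover have "\<forall>\<^sub>F k in sequentially. N \<le> k"
    by (rule eventually_ge_at_top)
  ultimately have "\<forall>\<^sub>F k in sequentially. dist (x k) a < 1/2 \<and> decrement k < \<delta> \<and> N \<le> k"
    by eventually_elim blast
  then obtain k where k: "dist (x k) a < 1/2" "decrement k < \<delta>" "N \<le> k"
    using eventually_happens'[OF sequentially_bot] by blast
  then have "norm (d k) < r N"
    using short nonnull by blast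
  with long_directions_if_eventually_nonnull[OF nonnull k(3)] show False
    by simp
qed

lemma eps_tendsto_zero: "eps \<longlonglongrightarrow> 0"
proof (rule decseq_tendsto_zero_if_frequently_contracts[OF decseq_eps _ _ theta(2)])
  show "0 \<le> eps k" for k
    using radii_pos[of k] by simp
  show "\<exists>k\<ge>N. eps (Suc k) = \<theta> * eps k" for N
    using frequently_null_direction null_direction_contracts(1) by blast
qed

lemma r_tendsto_zero: "r \<longlonglongrightarrow> 0"
proof (rule decseq_tendsto_zero_if_frequently_contracts[OF decseq_r _ _ mu(2)])
  show "0 \<le> r k" for k
    using radii_pos[of k] by simp
  show "\<exists>k\<ge>N. r (Suc k) = \<mu> * r k" for N
    using frequently_null_direction null_direction_contracts(2) by blast
qed

text \<open>Along a subsequence converging to \<open>a\<close> the inexact gradients tend to \<open>\<nabla>f(a)\<close>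
  while \<open>r\<^sub>k + \<epsilon>\<^sub>k \<rightarrow> 0\<close>; if \<open>\<nabla>f(a) \<noteq> 0\<close>, the directions are eventually nonzero
  with length close to \<open>\<parallel>\<nabla>f(a)\<parallel>\<close>, which the vanishing decrements forbid.\<close>

lemma stationary_acc_point:
  assumes "a \<in> acc_points x"
  shows "grad a = 0"
proof (rule ccontr)
  assume "grad a \<noteq> 0"
  then have G: "0 < norm (grad a)" by simp
  obtain h where h: "strict_mono h" "(x \<circ> h) \<longlonglongrightarrow> a"
    using assms by (auto simp: acc_points_def)
  have g_lim: "(\<lambda>j. g (h j)) \<longlonglongrightarrow> grad a"
    using h by (rule inexact_gradient_subseq_tendsto)
  have r_lim: "(\<lambda>j. r (h j)) \<longlonglongrightarrow> 0" and eps_lim: "(\<lambda>j. eps (h j)) \<longlonglongrightarrow> 0"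
    using LIMSEQ_subseq_LIMSEQ[OF r_tendsto_zero h(1)] LIMSEQ_subseq_LIMSEQ[OF eps_tendsto_zero h(1)]
    by (simp_all add: o_def)
  have lim_gap: "(\<lambda>j. norm (g (h j)) - r (h j) - eps (h j)) \<longlonglongrightarrow> norm (grad a)"
    using tendsto_diff[OF tendsto_diff[OF tendsto_norm[OF g_lim] r_lim] eps_lim] by simp
  have lim_len: "(\<lambda>j. norm (g (h j)) - eps (h j)) \<longlonglongrightarrow> norm (grad a)"
    using tendsto_diff[OF tendsto_norm[OF g_lim] eps_lim] by simp
  obtain \<delta> where "0 < \<delta>" and short: "\<And>k. dist (x k) a < 1/2 \<Longrightarrow> d k \<noteq> 0 \<Longrightarrow>
      decrement k < \<delta> \<Longrightarrow> norm (d k) < norm (grad a) / 2"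
    using short_direction_if_small_decrement[of "norm (grad a) / 2"] G by auto
  have x_lim: "(\<lambda>j. x (h j)) \<longlonglongrightarrow> a" and decrement_lim: "(\<lambda>j. decrement (h j)) \<longlonglongrightarrow> 0"
    using h(2) LIMSEQ_subseq_LIMSEQ[OF decrement_tendsto_zero h(1)] by (simp_all add: o_def)
  have "\<forall>\<^sub>F j in sequentially. dist (x (h j)) a < 1/2"
    using x_lim by (rule tendstoD) simp
  moreover have "\<forall>\<^sub>F j in sequentially. decrement (h j) < \<delta>"
    using decrement_lim \<open>0 < \<delta>\<close> by (rule order_tendstoD(2))
  moreover have "\<forall>\<^sub>F j in sequentially. 0 < norm (g (h j)) - r (h j) - eps (h j)"
    using lim_gap G by (rule order_tendstoD(1))
  moreover have "\<forall>\<^sub>F j in sequentially. norm (grad a) / 2 < norm (g (h j)) - eps (h j)"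
    using lim_len by (rule order_tendstoD(1)) (use G in simp)
  ultimately have "\<forall>\<^sub>F j in sequentially. dist (x (h j)) a < 1/2 \<and> decrement (h j) < \<delta> \<and>
      r (h j) + eps (h j) < norm (g (h j)) \<and> norm (grad a) / 2 < norm (g (h j)) - eps (h j)"
    by eventually_elim auto
  then obtain j where j: "dist (x (h j)) a < 1/2" "decrement (h j) < \<delta>"
      "r (h j) + eps (h j) < norm (g (h j))" "norm (grad a) / 2 < norm (g (h j)) - eps (h j)"
    using eventually_happens'[OF sequentially_bot] by blast
  then have "d (h j) \<noteq> 0"
    using null_direction_iff by simp
  with short[OF j(1) _ j(2)] nonnull_direction(5) j(4) show False
    by simp
qed

end

theorem mainTheorem10:
  fixes f :: "'a::euclidean_space \<Rightarrow> real"
    and grad :: "'a \<Rightarrow> 'a"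
    and x g d :: "nat \<Rightarrow> 'a"
    and eps r t rho :: "nat \<Rightarrow> real"
    and \<mu> \<theta> \<beta> \<gamma> \<tau> :: real
  assumes f_grad: "\<And>y. (f has_derivative (\<lambda>h. grad y \<bullet> h)) (at y)"
    and grad_cont: "continuous_on UNIV grad"
    and eps0: "eps 0 > 0" and r0: "r 0 > 0"
    and mu: "0 < \<mu>" "\<mu> < 1" and theta: "0 < \<theta>" "\<theta> < 1"
    and rho_pos: "\<And>k. rho k > 0"
    and beta: "0 < \<beta>" "\<beta> < 1" and gamma: "0 < \<gamma>" "\<gamma> < 1"
    and tau: "0 < \<tau>" "\<tau> < 1"
    and step1: "\<And>k. norm (g k - grad (x k)) \<le> min (eps k) (rho k)"
    and step2: "\<And>k. if norm (g k) \<le> r k + eps k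
        then r (Suc k) = \<mu> * r k \<and> eps (Suc k) = \<theta> * eps k \<and> d k = 0
        else r (Suc k) = r k \<and> eps (Suc k) = eps k \<and>
             d k = - (((norm (g k) - eps k) / norm (g k)) *\<^sub>R g k)"
    and stepsize: "\<And>k. if d k = 0 then t k = \<tau>
        else (\<exists>j::nat. t k = \<gamma> ^ j \<and> armijo f \<beta> (x k) (d k) (\<gamma> ^ j) \<and>
                 (\<forall>i<j. \<not> armijo f \<beta> (x k) (d k) (\<gamma> ^ i)))"
    and update: "\<And>k. x (Suc k) = x k + t k *\<^sub>R d k"
    and f_bdd: "bdd_below (range (\<lambda>k. f (x k)))"
    and rho_lim: "rho \<longlonglongrightarrow> 0"
  shows "(decseq eps \<and> eps \<longlonglongrightarrow> 0 \<and> decseq r \<and> r \<longlonglongrightarrow> 0)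
    \<and> (\<forall>a \<in> acc_points x. grad a = 0)
    \<and> (bounded (range x) \<longrightarrow>
         acc_points x \<noteq> {} \<and> compact (acc_points x) \<and> connected (acc_points x))
    \<and> (\<forall>a \<in> acc_points x. (\<exists>e>0. \<forall>b \<in> acc_points x. dist b a < e \<longrightarrow> b = a)
         \<longrightarrow> x \<longlonglongrightarrow> a)"
proof -
  interpret irg f grad x g d eps r t rho \<mu> \<theta> \<beta> \<gamma> \<tau>
    by (rule irg.intro) (fact assms)+
  have "\<forall>a \<in> acc_points x. (\<exists>e>0. \<forall>b \<in> acc_points x. dist b a < e \<longrightarrow> b = a) \<longrightarrow> x \<longlonglongrightarrow> a"
    using tendsto_isolated_acc_point[OF step_tendsto_zero] by blast
  then show ?thesis
    using decseq_eps eps_tendsto_zero decseq_r r_tendsto_zero stationary_acc_point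
      acc_points_nonempty_compact_connected[OF _ step_tendsto_zero]
    by blast
qed

end
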